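(* Let $E$ be a real Banach space, $K\subset E$ nonempty, closed and convex, and $g\in\mathcal F$ a totally convex function on $E$ satisfying H1–H2. If $T:K\to\mathcal P(K)$ is a multivalued mapping with nonempty, closed, convex values which is quasi $D_g$-nonexpansive, then $\mathrm{Fix}(T)$ is closed and convex.
   Context: $\mathcal F$ is the family of functions $g:E\to\mathbb R$ that are strictly convex, lower semicontinuous and Gâteaux differentiable, with derivative $g'$. $D_g(x,y)=g(x)-g(y)-\langle x-y,g'(y)\rangle$. $v_g(x,t)=\inf\{D_g(y,x):\|y-x\|=t\}$; $g$ is totally convex if $v_g(x,t)>0$ for all $x\in E$, $t>0$; uniformly totally convex on $E$ if $\inf_{x\in A}v_g(x,t)>0$ for every $t>0$ and bounded $A\subset E$. H1: the level sets of $D_g(x,\cdot)$ are bounded for all $x$; H2: $g$ is uniformly totally convex on $E$. For nonempty closed convex $D\subset E$, $\Pi^g_D(x)$ denotes the unique minimizer of $D_g(\cdot,x)$ over $D$ (Bregman projection). $\mathrm{Fix}(T)=\{x\in K: x\in T(x)\}$. $T$ is quasi $D_g$-nonexpansive if $S(x):=\Pi^g_{T(x)}(x)$ satisfies $\mathrm{Fix}(S)\ne\emptyset$ and $D_g(p,S(x))\le D_g(p,x)$ for all $p\in\mathrm{Fix}(S)$, $x\in K$. *)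

theory Defs
  imports "HOL-Analysis.Analysis"
begin

definition strictly_convex :: "('a::real_vector \<Rightarrow> real) \<Rightarrow> bool" where
  "strictly_convex g \<longleftrightarrow>
     (\<forall>x y t. x \<noteq> y \<and> 0 < t \<and> t < 1 \<longrightarrow>
        g ((1 - t) *\<^sub>R x + t *\<^sub>R y) < (1 - t) * g x + t * g y)"

definition lower_semicont :: "('a::topological_space \<Rightarrow> real) \<Rightarrow> bool" where
  "lower_semicont g \<longleftrightarrow> (\<forall>x c. c < g x \<longrightarrow> (\<forall>\<^sub>F y in nhds x. c < g y))"

definition has_gateaux_derivative :: "('a::real_normed_vector \<Rightarrow> real) \<Rightarrow> ('a \<Rightarrow> real) \<Rightarrow> 'a \<Rightarrow> bool" where
  "has_gateaux_derivative g L x \<longleftrightarrow> bounded_linear L \<and>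
     (\<forall>h. ((\<lambda>t. (g (x + t *\<^sub>R h) - g x) / t) \<longlongrightarrow> L h) (at 0))"

definition in_F :: "('a::real_normed_vector \<Rightarrow> real) \<Rightarrow> ('a \<Rightarrow> 'a \<Rightarrow> real) \<Rightarrow> bool" where
  "in_F g g' \<longleftrightarrow> strictly_convex g \<and> lower_semicont g \<and> (\<forall>x. has_gateaux_derivative g (g' x) x)"

definition bregman :: "('a::real_vector \<Rightarrow> real) \<Rightarrow> ('a \<Rightarrow> 'a \<Rightarrow> real) \<Rightarrow> 'a \<Rightarrow> 'a \<Rightarrow> real" where
  "bregman g g' x y = g x - g y - g' y (x - y)"

definition modulus_tc :: "('a::real_normed_vector \<Rightarrow> real) \<Rightarrow> ('a \<Rightarrow> 'a \<Rightarrow> real) \<Rightarrow> 'a \<Rightarrow> real \<Rightarrow> real" where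
  "modulus_tc g g' x t = Inf {bregman g g' y x | y. norm (y - x) = t}"

definition totally_convex :: "('a::real_normed_vector \<Rightarrow> real) \<Rightarrow> ('a \<Rightarrow> 'a \<Rightarrow> real) \<Rightarrow> bool" where
  "totally_convex g g' \<longleftrightarrow> (\<forall>x t. 0 < t \<longrightarrow> modulus_tc g g' x t > 0)"

(* inf over empty A is +infinity > 0, so only nonempty A impose a condition *)
definition uniformly_totally_convex :: "('a::real_normed_vector \<Rightarrow> real) \<Rightarrow> ('a \<Rightarrow> 'a \<Rightarrow> real) \<Rightarrow> bool" where
  "uniformly_totally_convex g g' \<longleftrightarrow>
     (\<forall>t A. 0 < t \<and> bounded A \<and> A \<noteq> {} \<longrightarrow> (INF x\<in>A. modulus_tc g g' x t) > 0)"

definition H1 :: "('a::real_normed_vector \<Rightarrow> real) \<Rightarrow> ('a \<Rightarrow> 'a \<Rightarrow> real) \<Rightarrow> bool" where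
  "H1 g g' \<longleftrightarrow> (\<forall>x r. bounded {y. bregman g g' x y \<le> r})"

definition H2 :: "('a::real_normed_vector \<Rightarrow> real) \<Rightarrow> ('a \<Rightarrow> 'a \<Rightarrow> real) \<Rightarrow> bool" where
  "H2 g g' \<longleftrightarrow> uniformly_totally_convex g g'"

definition bregman_proj :: "('a::real_vector \<Rightarrow> real) \<Rightarrow> ('a \<Rightarrow> 'a \<Rightarrow> real) \<Rightarrow> 'a set \<Rightarrow> 'a \<Rightarrow> 'a" where
  "bregman_proj g g' D x = (THE y. y \<in> D \<and> (\<forall>z\<in>D. bregman g g' y x \<le> bregman g g' z x))"

definition Fix_mv :: "'a set \<Rightarrow> ('a \<Rightarrow> 'a set) \<Rightarrow> 'a set" where
  "Fix_mv K T = {x\<in>K. x \<in> T x}"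

definition Fix_sv :: "'a set \<Rightarrow> ('a \<Rightarrow> 'a) \<Rightarrow> 'a set" where
  "Fix_sv K S = {x\<in>K. S x = x}"

definition quasi_Dg_nonexpansive ::
  "('a::real_vector \<Rightarrow> real) \<Rightarrow> ('a \<Rightarrow> 'a \<Rightarrow> real) \<Rightarrow> 'a set \<Rightarrow> ('a \<Rightarrow> 'a set) \<Rightarrow> bool" where
  "quasi_Dg_nonexpansive g g' K T \<longleftrightarrow>
     (let S = (\<lambda>x. bregman_proj g g' (T x) x) in
        Fix_sv K S \<noteq> {} \<and>
        (\<forall>p\<in>Fix_sv K S. \<forall>x\<in>K. bregman g g' p (S x) \<le> bregman g g' p x))"

end

theory Submission
  imports Defs
begin

text \<open>For \<open>u + v = 1\<close> the difference \<open>u D(a,q) + v D(b,q) - D(u a + v b, q)\<close> is the convexity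
  defect \<open>u g(a) + v g(b) - g(u a + v b)\<close>, independently of the base point \<open>q\<close>. With uniform total
  convexity on balls this makes minimizing sequences of \<open>D(\<cdot>, x)\<close> on a closed convex set Cauchy,
  so by lower semicontinuity Bregman projections exist; they are unique by strict convexity, and
  \<open>Fix T\<close> is the fixed point set of \<open>S x = \<Pi>(T x, x)\<close>. For fixed points \<open>p\<close> of \<open>S\<close> the
  inequality \<open>D(p, S x) \<le> D(p, x)\<close> is preserved under convex combinations (by the identity, since
  the defect does not depend on \<open>q\<close>) and under limits (as \<open>p \<mapsto> D(p, S x) - D(p, x)\<close> is affine
  and continuous); choosing \<open>x = p\<close> gives \<open>D(p, S p) \<le> 0\<close>, i.e. \<open>S p = p\<close>.\<close>

lemma midpoint_in_convex: "convex S \<Longrightarrow> a \<in> S \<Longrightarrow> b \<in> S \<Longrightarrow> midpoint a b \<in> S"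
  using closed_segment_subset midpoint_in_closed_segment by blast

lemma in_F_bounded_linear: "in_F g g' \<Longrightarrow> bounded_linear (g' x)"
  unfolding in_F_def has_gateaux_derivative_def by blast

lemma in_F_linear: "in_F g g' \<Longrightarrow> linear (g' x)"
  using in_F_bounded_linear bounded_linear.linear by blast

lemma in_F_convex_on:
  assumes "in_F g g'"
  shows "convex_on UNIV g"
proof (rule convex_onI)
  fix t :: real and x y :: 'a
  assume "0 < t" "t < 1"
  then show "g ((1 - t) *\<^sub>R x + t *\<^sub>R y) \<le> (1 - t) * g x + t * g y"
  proof (cases "x = y")
    case True
    have "(1 - t) *\<^sub>R x + t *\<^sub>R x = x" by (simp flip: scaleR_add_left)
    moreover have "(1 - t) * g x + t * g x = g x" by (simp add: algebra_simps)
    ultimately show ?thesis using True by simp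
  next
    case False
    with \<open>0 < t\<close> \<open>t < 1\<close> show ?thesis
      using assms unfolding in_F_def strictly_convex_def by (simp add: less_imp_le)
  qed
qed simp

lemma in_F_midpoint_less:
  assumes "in_F g g'" "a \<noteq> b"
  shows "g (midpoint a b) < (g a + g b) / 2"
proof -
  have "\<forall>t. a \<noteq> b \<and> 0 < t \<and> t < 1 \<longrightarrow>
      g ((1 - t) *\<^sub>R a + t *\<^sub>R b) < (1 - t) * g a + t * g b"
    using assms(1) unfolding in_F_def strictly_convex_def by blast
  moreover have "a \<noteq> b \<and> 0 < (1/2::real) \<and> (1/2::real) < 1" using assms(2) by simp
  ultimately have "g ((1 - 1/2) *\<^sub>R a + (1/2) *\<^sub>R b) < (1 - 1/2) * g a + (1/2) * g b"
    by blast
  moreover have "midpoint a b = (1 - 1/2) *\<^sub>R a + (1/2) *\<^sub>R b"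
    by (simp add: midpoint_def scaleR_right_distrib)
  ultimately show ?thesis by simp
qed

lemma in_F_gradient_le:
  assumes "in_F g g'"
  shows "g' x (y - x) \<le> g y - g x"
proof -
  have "((\<lambda>t. (g (x + t *\<^sub>R (y - x)) - g x) / t) \<longlongrightarrow> g' x (y - x)) (at_right 0)"
    using assms unfolding in_F_def has_gateaux_derivative_def
    by (blast intro: tendsto_mono[OF at_within_le_at])
  moreover have "\<forall>\<^sub>F t in at_right 0. (g (x + t *\<^sub>R (y - x)) - g x) / t \<le> g y - g x"
    unfolding eventually_at_right[OF zero_less_one]
  proof (intro exI[of _ 1] conjI allI impI)
    fix t :: real assume t: "0 < t" "t < 1"
    have "x + t *\<^sub>R (y - x) = (1 - t) *\<^sub>R x + t *\<^sub>R y" by (simp add: algebra_simps)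
    then have "g (x + t *\<^sub>R (y - x)) \<le> (1 - t) * g x + t * g y"
      using convex_onD[OF in_F_convex_on[OF assms], of t x y] t by simp
    then have "g (x + t *\<^sub>R (y - x)) - g x \<le> (g y - g x) * t"
      by (simp add: algebra_simps)
    then show "(g (x + t *\<^sub>R (y - x)) - g x) / t \<le> g y - g x"
      using t by (simp add: pos_divide_le_eq)
  qed simp
  ultimately show ?thesis by (rule tendsto_upperbound) simp
qed

lemma bregman_nonneg: "in_F g g' \<Longrightarrow> 0 \<le> bregman g g' y x"
  using in_F_gradient_le[of g g' x y] unfolding bregman_def by simp

lemma bregman_same: "in_F g g' \<Longrightarrow> bregman g g' x x = 0"
  using in_F_linear[of g g' x] unfolding bregman_def by (simp add: linear_0)

lemma bregman_convex_combination:
  assumes "in_F g g'" "u + v = 1"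
  shows "u * bregman g g' a q + v * bregman g g' b q
       = bregman g g' (u *\<^sub>R a + v *\<^sub>R b) q + (u * g a + v * g b - g (u *\<^sub>R a + v *\<^sub>R b))"
proof -
  have v: "v = 1 - u" using assms(2) by simp
  have "u *\<^sub>R a + v *\<^sub>R b - q = u *\<^sub>R (a - q) + v *\<^sub>R (b - q)"
    unfolding v by (simp add: algebra_simps)
  then have "g' q (u *\<^sub>R a + v *\<^sub>R b - q) = u * g' q (a - q) + v * g' q (b - q)"
    using linear_add[OF in_F_linear[OF assms(1)]] linear_scale[OF in_F_linear[OF assms(1)]] by simp
  then show ?thesis
    unfolding bregman_def v by (simp add: algebra_simps)
qed

lemma bregman_midpoint:
  assumes "in_F g g'"
  shows "bregman g g' a q + bregman g g' b q
       = 2 * bregman g g' (midpoint a b) q + (g a + g b - 2 * g (midpoint a b))"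
proof -
  have "midpoint a b = (1/2) *\<^sub>R a + (1/2) *\<^sub>R b"
    by (simp add: midpoint_def scaleR_right_distrib)
  then show ?thesis
    using bregman_convex_combination[OF assms, of "1/2" "1/2" a q b]
    by simp
qed

lemma bregman_pos:
  assumes "in_F g g'" "y \<noteq> x"
  shows "0 < bregman g g' y x"
  using bregman_midpoint[OF assms(1), of y x x]
    bregman_nonneg[OF assms(1), of "midpoint y x" x] in_F_midpoint_less[OF assms]
    bregman_same[OF assms(1)]
  by simp

lemma bregman_le_0_iff: "in_F g g' \<Longrightarrow> bregman g g' y x \<le> 0 \<longleftrightarrow> y = x"
  using bregman_pos[of g g' y x] bregman_same[of g g' x] by force

lemma bregman_segment_le:
  assumes "in_F g g'" "0 \<le> c" "c \<le> 1"
  shows "bregman g g' (z + c *\<^sub>R (y - z)) z \<le> c * bregman g g' y z"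
proof -
  have "z + c *\<^sub>R (y - z) = (1 - c) *\<^sub>R z + c *\<^sub>R y" by (simp add: algebra_simps)
  then show ?thesis
    using bregman_convex_combination[OF assms(1), of "1 - c" c z z y]
      convex_onD[OF in_F_convex_on[OF assms(1)], of c z y] bregman_same[OF assms(1)] assms(2,3)
    by simp
qed

lemma modulus_tc_scaled_le_bregman:
  assumes "in_F g g'" "0 < t" "t \<le> norm (a - z)"
  shows "norm (a - z) * modulus_tc g g' z t \<le> t * bregman g g' a z"
proof -
  define s where "s = norm (a - z)"
  have s: "0 < s" using assms(2,3) unfolding s_def by linarith
  define w where "w = z + (t / s) *\<^sub>R (a - z)"
  have "norm (w - z) = t" using s assms(2) unfolding w_def s_def by simp
  then have "modulus_tc g g' z t \<le> bregman g g' w z"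
    unfolding modulus_tc_def
    by (intro cInf_lower) (auto intro!: bdd_belowI[of _ 0] bregman_nonneg[OF assms(1)])
  also have "\<dots> \<le> (t / s) * bregman g g' a z"
    unfolding w_def using s assms(2,3) by (intro bregman_segment_le[OF assms(1)]) (auto simp: s_def)
  finally show ?thesis
    using s unfolding s_def[symmetric] by (simp add: field_simps)
qed

lemma modulus_tc_nonneg:
  fixes u z :: "'a::real_normed_vector"
  assumes "in_F g g'" "0 < t" "u \<noteq> 0"
  shows "0 \<le> modulus_tc g g' z t"
proof -
  have "norm ((z + (t / norm u) *\<^sub>R u) - z) = t" using assms(2,3) by simp
  then have "{bregman g g' y z | y. norm (y - z) = t} \<noteq> {}" by blast
  then show ?thesis
    unfolding modulus_tc_def by (rule cInf_greatest) (auto intro: bregman_nonneg[OF assms(1)])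
qed

lemma modulus_tc_le_bregman:
  assumes "in_F g g'" "0 < t" "t \<le> norm (a - z)"
  shows "modulus_tc g g' z t \<le> bregman g g' a z"
proof -
  have "a - z \<noteq> 0" using assms(2,3) by auto
  then have "0 \<le> modulus_tc g g' z t" by (rule modulus_tc_nonneg[OF assms(1,2)])
  then have "t * modulus_tc g g' z t \<le> norm (a - z) * modulus_tc g g' z t"
    using assms(3) by (intro mult_right_mono)
  also have "\<dots> \<le> t * bregman g g' a z" by (rule modulus_tc_scaled_le_bregman[OF assms])
  finally show ?thesis using assms(2) by simp
qed

lemma totally_convex_norm_le:
  assumes "in_F g g'" "totally_convex g g'"
  shows "norm (y - x) \<le> max 1 (bregman g g' y x / modulus_tc g g' x 1)"
proof (cases "norm (y - x) \<le> 1")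
  case False
  have "0 < modulus_tc g g' x 1" using assms(2) unfolding totally_convex_def by simp
  moreover have "norm (y - x) * modulus_tc g g' x 1 \<le> bregman g g' y x"
    using modulus_tc_scaled_le_bregman[OF assms(1), of 1 y x] False by simp
  ultimately have "norm (y - x) \<le> bregman g g' y x / modulus_tc g g' x 1"
    by (simp add: pos_le_divide_eq)
  then show ?thesis by (simp add: le_max_iff_disj)
qed simp

lemma uniformly_totally_convex_midpoint_gap:
  assumes "in_F g g'" "uniformly_totally_convex g g'" "0 < e" "0 \<le> R"
  obtains \<delta> where "0 < \<delta>"
    and "\<And>a b. a \<in> cball x R \<Longrightarrow> b \<in> cball x R \<Longrightarrow> e \<le> dist a b \<Longrightarrow>
           2 * bregman g g' (midpoint a b) x + 2 * \<delta> \<le> bregman g g' a x + bregman g g' b x"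
proof -
  define \<delta> where "\<delta> = (INF z\<in>cball x R. modulus_tc g g' z (e/2))"
  have pos: "0 < \<delta>"
    using assms(2-4) unfolding uniformly_totally_convex_def \<delta>_def by auto
  have gap: "2 * bregman g g' (midpoint a b) x + 2 * \<delta> \<le> bregman g g' a x + bregman g g' b x"
    if a: "a \<in> cball x R" and b: "b \<in> cball x R" and ab: "e \<le> dist a b" for a b
  proof -
    define m where "m = midpoint a b"
    have "a - b \<noteq> 0" using ab assms(3) by auto
    then have "0 \<le> modulus_tc g g' z (e/2)" for z
      using modulus_tc_nonneg[OF assms(1) _ \<open>a - b \<noteq> 0\<close>] assms(3) by simp
    then have "bdd_below ((\<lambda>z. modulus_tc g g' z (e/2)) ` cball x R)"
      by (intro bdd_belowI2)
    moreover have "m \<in> cball x R" unfolding m_def using convex_cball a b by (rule midpoint_in_convex)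
    ultimately have \<delta>_le: "\<delta> \<le> modulus_tc g g' m (e/2)"
      unfolding \<delta>_def by (intro cINF_lower)
    have "dist a m = dist a b / 2" "dist b m = dist a b / 2"
      unfolding m_def by (simp_all add: dist_midpoint)
    then have "e/2 \<le> norm (a - m)" "e/2 \<le> norm (b - m)"
      using ab by (simp_all add: dist_norm)
    then have "\<delta> \<le> bregman g g' a m" "\<delta> \<le> bregman g g' b m"
      using \<delta>_le modulus_tc_le_bregman[OF assms(1)] assms(3) by (meson half_gt_zero order_trans)+
    moreover have "bregman g g' a x + bregman g g' b x
        = 2 * bregman g g' m x + bregman g g' a m + bregman g g' b m"
      using bregman_midpoint[OF assms(1), of a x b] bregman_midpoint[OF assms(1), of a m b]
      unfolding m_def by (simp add: bregman_same[OF assms(1)])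
    ultimately show ?thesis unfolding m_def by linarith
  qed
  from pos gap show ?thesis by (rule that)
qed

lemma lower_semicont_LIMSEQ_le:
  assumes "lower_semicont g" "xs \<longlonglongrightarrow> x" "(\<lambda>n. g (xs n)) \<longlonglongrightarrow> L"
  shows "g x \<le> L"
proof (rule dense_le)
  fix c assume "c < g x"
  then have "\<forall>\<^sub>F y in nhds x. c < g y" using assms(1) unfolding lower_semicont_def by blast
  then have "\<forall>\<^sub>F n in sequentially. c < g (xs n)" using assms(2) unfolding filterlim_iff by blast
  then have "\<forall>\<^sub>F n in sequentially. c \<le> g (xs n)" by (auto elim: eventually_mono)
  then show "c \<le> L" by (rule tendsto_lowerbound[OF assms(3)]) simp
qed

lemma INF_as_limit_real:
  fixes f :: "'b \<Rightarrow> real"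
  assumes "C \<noteq> {}" "bdd_below (f ` C)"
  obtains ys where "\<And>n. ys n \<in> C" and "(\<lambda>n. f (ys n)) \<longlonglongrightarrow> (INF z\<in>C. f z)"
proof -
  define m where "m = (INF z\<in>C. f z)"
  have "\<exists>z\<in>C. f z < m + inverse (real (Suc n))" for n
    unfolding m_def using assms by (subst cINF_less_iff[symmetric]) auto
  then obtain ys where ys: "\<And>n. ys n \<in> C" "\<And>n. f (ys n) < m + inverse (real (Suc n))"
    by metis
  have "(\<lambda>n. f (ys n)) \<longlonglongrightarrow> m"
  proof (rule tendsto_sandwich)
    show "\<forall>\<^sub>F n in sequentially. m \<le> f (ys n)"
      unfolding m_def using assms(2) ys(1) by (simp add: cINF_lower)
    show "\<forall>\<^sub>F n in sequentially. f (ys n) \<le> m + inverse (real (Suc n))"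
      using ys(2) by (simp add: less_imp_le)
    show "(\<lambda>n. m + inverse (real (Suc n))) \<longlonglongrightarrow> m"
      using tendsto_add[OF tendsto_const LIMSEQ_inverse_real_of_nat, of m] by simp
  qed simp
  with ys(1) show ?thesis unfolding m_def by (rule that)
qed

lemma bregman_minimizing_sequence_Cauchy:
  assumes F: "in_F g g'" and tc: "totally_convex g g'" and utc: "uniformly_totally_convex g g'"
    and C: "convex C" and ys: "\<And>n. ys n \<in> C"
    and lower: "\<And>z. z \<in> C \<Longrightarrow> m \<le> bregman g g' z x"
    and lim: "(\<lambda>n. bregman g g' (ys n) x) \<longlonglongrightarrow> m"
  shows "Cauchy ys"
proof (rule metric_CauchyI)
  fix e :: real assume "0 < e"
  define c where "c = modulus_tc g g' x 1"
  have c: "0 < c" using tc unfolding totally_convex_def c_def by simp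
  define R where "R = max 1 ((m + 1) / c)"
  have "0 \<le> R" unfolding R_def by simp
  obtain \<delta> where \<delta>: "0 < \<delta>" and gap: "\<And>a b. a \<in> cball x R \<Longrightarrow> b \<in> cball x R \<Longrightarrow> e \<le> dist a b \<Longrightarrow>
      2 * bregman g g' (midpoint a b) x + 2 * \<delta> \<le> bregman g g' a x + bregman g g' b x"
    using uniformly_totally_convex_midpoint_gap[OF F utc \<open>0 < e\<close> \<open>0 \<le> R\<close>] by blast
  have "\<forall>\<^sub>F n in sequentially. bregman g g' (ys n) x < m + min 1 \<delta>"
    using lim \<delta> by (intro order_tendstoD(2)) auto
  then obtain N where N: "\<And>n. N \<le> n \<Longrightarrow> bregman g g' (ys n) x < m + min 1 \<delta>"
    unfolding eventually_sequentially by blast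
  have ball: "ys n \<in> cball x R" if "N \<le> n" for n
  proof -
    have "bregman g g' (ys n) x / c \<le> (m + 1) / c"
      using N[OF that] c by (intro divide_right_mono) auto
    then have "norm (ys n - x) \<le> R"
      using totally_convex_norm_le[OF F tc, of "ys n" x] unfolding R_def c_def[symmetric]
      by (meson max.mono order.refl order.trans)
    then show ?thesis by (simp add: dist_norm norm_minus_commute)
  qed
  show "\<exists>M. \<forall>p\<ge>M. \<forall>q\<ge>M. dist (ys p) (ys q) < e"
  proof (intro exI allI impI)
    fix p q assume p: "N \<le> p" and q: "N \<le> q"
    show "dist (ys p) (ys q) < e"
    proof (rule ccontr)
      assume "\<not> dist (ys p) (ys q) < e"
      then have "2 * bregman g g' (midpoint (ys p) (ys q)) x + 2 * \<delta>
          \<le> bregman g g' (ys p) x + bregman g g' (ys q) x"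
        using gap ball p q by simp
      moreover have "m \<le> bregman g g' (midpoint (ys p) (ys q)) x"
        using lower midpoint_in_convex[OF C ys ys] by blast
      ultimately show False using N[OF p] N[OF q] by linarith
    qed
  qed
qed

lemma bregman_minimizer_exists:
  fixes g :: "'a::banach \<Rightarrow> real"
  assumes F: "in_F g g'" and tc: "totally_convex g g'" and utc: "uniformly_totally_convex g g'"
    and C: "closed C" "convex C" "C \<noteq> {}"
  shows "\<exists>y\<in>C. \<forall>z\<in>C. bregman g g' y x \<le> bregman g g' z x"
proof -
  define m where "m = (INF z\<in>C. bregman g g' z x)"
  have bdd: "bdd_below ((\<lambda>z. bregman g g' z x) ` C)"
    by (intro bdd_belowI2[of _ 0] bregman_nonneg[OF F])
  have lower: "m \<le> bregman g g' z x" if "z \<in> C" for z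
    unfolding m_def using bdd that by (rule cINF_lower)
  obtain ys where ys: "\<And>n. ys n \<in> C" and lim: "(\<lambda>n. bregman g g' (ys n) x) \<longlonglongrightarrow> m"
    using INF_as_limit_real[OF C(3) bdd] unfolding m_def by blast
  have "Cauchy ys" by (rule bregman_minimizing_sequence_Cauchy[OF F tc utc C(2) ys lower lim])
  then obtain y where y: "ys \<longlonglongrightarrow> y" using Cauchy_convergent_iff convergent_def by blast
  have "y \<in> C" using closed_sequentially[OF C(1)] ys y by blast
  define L where "L u = g x + g' x (u - x)" for u
  have "(\<lambda>n. L (ys n)) \<longlonglongrightarrow> L y"
    unfolding L_def
    by (intro tendsto_intros bounded_linear.tendsto[OF in_F_bounded_linear[OF F]] y)
  moreover have "g u = bregman g g' u x + L u" for u
    unfolding bregman_def L_def by simp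
  ultimately have "(\<lambda>n. g (ys n)) \<longlonglongrightarrow> m + L y"
    using tendsto_add[OF lim] by simp
  then have "g y \<le> m + L y"
    using F y unfolding in_F_def by (blast intro: lower_semicont_LIMSEQ_le)
  then have "bregman g g' y x \<le> m" unfolding bregman_def L_def by simp
  with \<open>y \<in> C\<close> lower show ?thesis by (meson order_trans)
qed

lemma bregman_minimizer_unique:
  assumes F: "in_F g g'" and "convex C"
    and y1: "y1 \<in> C" "\<forall>z\<in>C. bregman g g' y1 x \<le> bregman g g' z x"
    and y2: "y2 \<in> C" "\<forall>z\<in>C. bregman g g' y2 x \<le> bregman g g' z x"
  shows "y1 = y2"
proof (rule ccontr)
  assume "y1 \<noteq> y2"
  define m where "m = midpoint y1 y2"
  have "m \<in> C" unfolding m_def using \<open>convex C\<close> y1(1) y2(1) by (rule midpoint_in_convex)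
  then have "bregman g g' y1 x \<le> bregman g g' m x" "bregman g g' y2 x \<le> bregman g g' m x"
    using y1(2) y2(2) by auto
  moreover have "2 * g m < g y1 + g y2"
    using in_F_midpoint_less[OF F \<open>y1 \<noteq> y2\<close>] unfolding m_def by simp
  ultimately show False
    using bregman_midpoint[OF F, of y1 x y2] unfolding m_def by linarith
qed

lemma bregman_proj_minimizes:
  fixes g :: "'a::banach \<Rightarrow> real"
  assumes "in_F g g'" "totally_convex g g'" "uniformly_totally_convex g g'"
    and "closed C" "convex C" "C \<noteq> {}"
  shows "bregman_proj g g' C x \<in> C
    \<and> (\<forall>z\<in>C. bregman g g' (bregman_proj g g' C x) x \<le> bregman g g' z x)"
  unfolding bregman_proj_def
proof (rule theI', rule ex_ex1I)
  show "\<exists>y. y \<in> C \<and> (\<forall>z\<in>C. bregman g g' y x \<le> bregman g g' z x)"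
    using bregman_minimizer_exists[OF assms] by blast
qed (use bregman_minimizer_unique[OF assms(1,5)] in blast)

lemma bregman_proj_self:
  assumes F: "in_F g g'" and "x \<in> C"
  shows "bregman_proj g g' C x = x"
  unfolding bregman_proj_def
proof (rule the_equality)
  show "x \<in> C \<and> (\<forall>z\<in>C. bregman g g' x x \<le> bregman g g' z x)"
    using \<open>x \<in> C\<close> bregman_nonneg[OF F] by (simp add: bregman_same[OF F])
  fix y assume "y \<in> C \<and> (\<forall>z\<in>C. bregman g g' y x \<le> bregman g g' z x)"
  then have "bregman g g' y x \<le> 0" using \<open>x \<in> C\<close> by (force simp: bregman_same[OF F])
  then show "y = x" using bregman_le_0_iff[OF F] by blast
qed

lemma Fix_mv_eq_Fix_sv_bregman_proj:
  fixes g :: "'a::banach \<Rightarrow> real"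
  assumes F: "in_F g g'" and "totally_convex g g'" "uniformly_totally_convex g g'"
    and T: "\<forall>x\<in>K. T x \<noteq> {} \<and> closed (T x) \<and> convex (T x)"
  shows "Fix_mv K T = Fix_sv K (\<lambda>x. bregman_proj g g' (T x) x)"
proof -
  have "x \<in> T x \<longleftrightarrow> bregman_proj g g' (T x) x = x" if "x \<in> K" for x
    using bregman_proj_self[OF F, of x "T x"] bregman_proj_minimizes[OF assms(1-3), of "T x" x]
      T that by metis
  then show ?thesis unfolding Fix_mv_def Fix_sv_def by auto
qed

lemma closed_bregman_le:
  assumes F: "in_F g g'"
  shows "closed {u. bregman g g' u q \<le> bregman g g' u l}"
proof -
  have "{u. bregman g g' u q \<le> bregman g g' u l} = {u. g l - g q - g' q (u - q) + g' l (u - l) \<le> 0}"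
    unfolding bregman_def by auto
  moreover have "closed {u. g l - g q - g' q (u - q) + g' l (u - l) \<le> 0}"
    by (intro closed_Collect_le continuous_intros
        bounded_linear.continuous_on[OF in_F_bounded_linear[OF F]])
  ultimately show ?thesis by simp
qed

lemma closed_Fix_sv_bregman_quasi_nonexpansive:
  assumes F: "in_F g g'" and "closed K"
    and qne: "\<And>p x. p \<in> Fix_sv K S \<Longrightarrow> x \<in> K \<Longrightarrow> bregman g g' p (S x) \<le> bregman g g' p x"
  shows "closed (Fix_sv K S)"
proof -
  have "l \<in> Fix_sv K S" if l: "l \<in> closure (Fix_sv K S)" for l
  proof -
    have "l \<in> K"
      using closure_minimal[of "Fix_sv K S" K] \<open>closed K\<close> l unfolding Fix_sv_def by blast
    then have "Fix_sv K S \<subseteq> {u. bregman g g' u (S l) \<le> bregman g g' u l}" using qne by blast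
    then have "bregman g g' l (S l) \<le> bregman g g' l l"
      using closure_minimal[OF _ closed_bregman_le[OF F]] l by blast
    then have "S l = l" using bregman_le_0_iff[OF F] by (simp add: bregman_same[OF F])
    with \<open>l \<in> K\<close> show ?thesis unfolding Fix_sv_def by simp
  qed
  then show ?thesis using closure_subset_eq by blast
qed

lemma convex_Fix_sv_bregman_quasi_nonexpansive:
  assumes F: "in_F g g'" and "convex K"
    and qne: "\<And>p x. p \<in> Fix_sv K S \<Longrightarrow> x \<in> K \<Longrightarrow> bregman g g' p (S x) \<le> bregman g g' p x"
  shows "convex (Fix_sv K S)"
proof (rule convexI)
  fix a b :: 'a and u v :: real
  assume a: "a \<in> Fix_sv K S" and b: "b \<in> Fix_sv K S" and "0 \<le> u" "0 \<le> v" and uv: "u + v = 1"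
  define p where "p = u *\<^sub>R a + v *\<^sub>R b"
  have "p \<in> K"
    using a b \<open>0 \<le> u\<close> \<open>0 \<le> v\<close> uv convexD[OF \<open>convex K\<close>] unfolding p_def Fix_sv_def by blast
  have "u * bregman g g' a (S p) + v * bregman g g' b (S p) \<le> u * bregman g g' a p + v * bregman g g' b p"
    using qne[OF a \<open>p \<in> K\<close>] qne[OF b \<open>p \<in> K\<close>] \<open>0 \<le> u\<close> \<open>0 \<le> v\<close>
    by (intro add_mono mult_left_mono)
  then have "bregman g g' p (S p) \<le> bregman g g' p p"
    using bregman_convex_combination[OF F uv, of a "S p" b] bregman_convex_combination[OF F uv, of a p b]
    unfolding p_def by linarith
  then have "S p = p" using bregman_le_0_iff[OF F] by (simp add: bregman_same[OF F])
  with \<open>p \<in> K\<close> show "u *\<^sub>R a + v *\<^sub>R b \<in> Fix_sv K S" unfolding p_def Fix_sv_def by simp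
qed

theorem proposition2p10:
  fixes g :: "'a::banach \<Rightarrow> real" and g' :: "'a \<Rightarrow> 'a \<Rightarrow> real"
    and K :: "'a set" and T :: "'a \<Rightarrow> 'a set"
  assumes "K \<noteq> {}" and "closed K" and "convex K"
    and "in_F g g'" and "totally_convex g g'" and "H1 g g'" and "H2 g g'"
    and "\<forall>x\<in>K. T x \<subseteq> K \<and> T x \<noteq> {} \<and> closed (T x) \<and> convex (T x)"
    and "quasi_Dg_nonexpansive g g' K T"
  shows "closed (Fix_mv K T) \<and> convex (Fix_mv K T)"
proof -
  define S where "S = (\<lambda>x. bregman_proj g g' (T x) x)"
  have qne: "\<And>p x. p \<in> Fix_sv K S \<Longrightarrow> x \<in> K \<Longrightarrow> bregman g g' p (S x) \<le> bregman g g' p x"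
    using assms(9) unfolding quasi_Dg_nonexpansive_def Let_def S_def by blast
  have "Fix_mv K T = Fix_sv K S"
    unfolding S_def using assms(4,5,7,8) unfolding H2_def
    by (intro Fix_mv_eq_Fix_sv_bregman_proj) auto
  then show ?thesis
    using closed_Fix_sv_bregman_quasi_nonexpansive[OF assms(4,2) qne]
      convex_Fix_sv_bregman_quasi_nonexpansive[OF assms(4,3) qne]
    by simp
qed

end
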